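(* Let $G$ be a finite Abelian group with identity $1$ and let $A=\{a_1,\ldots,a_t\}$ be a set of generators of $G$ satisfying the triangular relations $$a_1^{k_1}=1,\qquad a_i^{k_i}=a_1^{\lambda_{i,1}}\cdots a_{i-1}^{\lambda_{i,i-1}}\quad (i=2,\ldots,t),$$ where the $\lambda_{i,j}$ are nonnegative integers and, for every $i\in[t]$, $k_i\ge 2$ is the smallest positive integer such that $a_i^{k_i}\in\langle a_1,\ldots,a_{i-1}\rangle$ (for $i=1$ this subgroup is $\{1\}$). Then $G$ is isomorphic to $\Gamma(K,L)$, where $K=(k_i)$ and $L=(\lambda_{i,j})$, via the isomorphism $$\Psi(x_1^{j_1}\cdots x_t^{j_t})=a_1^{j_1}\cdots a_t^{j_t}\qquad (0\le j_i\le k_i-1,\ i\in[t]).$$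
   Context: For positive integers $k_1,\ldots,k_t$ and nonnegative integers $\lambda_{i,j}$ ($2\le i\le t$, $1\le j<i$), let $I$ be the ideal of $\mathbb{R}[x_1,\ldots,x_t]$ generated by $x_1^{k_1}-1$ and $x_i^{k_i}-x_1^{\lambda_{i,1}}\cdots x_{i-1}^{\lambda_{i,i-1}}$ ($i=2,\ldots,t$). The monomial group $\Gamma(K,L)$ is the set of residue classes in $\mathbb{R}[x_1,\ldots,x_t]/I$ of the monomials $x_1^{j_1}\cdots x_t^{j_t}$ with $0\le j_i\le k_i-1$, with the multiplication of the quotient ring (products are reduced to this form using the relations $x_1^{k_1}=1$, $x_i^{k_i}=x_1^{\lambda_{i,1}}\cdots x_{i-1}^{\lambda_{i,i-1}}$). *)

theory Defs
  imports "HOL-Algebra.Algebra" "HOL-Library.Poly_Mapping"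
begin

text \<open>Variables are indexed from 0, so x_i here is x_(i+1) of the paper.\<close>

type_synonym rpoly = "(nat \<Rightarrow>\<^sub>0 nat) \<Rightarrow>\<^sub>0 real"

definition mvar :: "nat \<Rightarrow> rpoly" where
  "mvar i = Poly_Mapping.single (Poly_Mapping.single i 1) 1"

definition mono :: "nat \<Rightarrow> (nat \<Rightarrow> nat) \<Rightarrow> rpoly" where
  "mono t j = (\<Prod>i<t. mvar i ^ j i)"

definition tri_gen :: "(nat \<Rightarrow> nat) \<Rightarrow> (nat \<Rightarrow> nat \<Rightarrow> nat) \<Rightarrow> nat \<Rightarrow> rpoly" where
  "tri_gen k lam i = mvar i ^ k i - (\<Prod>j<i. mvar j ^ lam i j)"

definition tri_ideal :: "nat \<Rightarrow> (nat \<Rightarrow> nat) \<Rightarrow> (nat \<Rightarrow> nat \<Rightarrow> nat) \<Rightarrow> rpoly set" where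
  "tri_ideal t k lam = {p. \<exists>h :: nat \<Rightarrow> rpoly. p = (\<Sum>i<t. h i * tri_gen k lam i)}"

definition cls :: "nat \<Rightarrow> (nat \<Rightarrow> nat) \<Rightarrow> (nat \<Rightarrow> nat \<Rightarrow> nat) \<Rightarrow> rpoly \<Rightarrow> rpoly set" where
  "cls t k lam p = {q. p - q \<in> tri_ideal t k lam}"

definition Gamma :: "nat \<Rightarrow> (nat \<Rightarrow> nat) \<Rightarrow> (nat \<Rightarrow> nat \<Rightarrow> nat) \<Rightarrow> rpoly set monoid" where
  "Gamma t k lam =
     \<lparr> carrier = {cls t k lam (mono t j) | j. \<forall>i<t. j i < k i},
       monoid.mult = (\<lambda>U V. cls t k lam ((SOME p. p \<in> U) * (SOME q. q \<in> V))),
       monoid.one = cls t k lam 1 \<rparr>"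

end

theory Submission
  imports Defs
begin

(* Send the monomial with exponent vector m to a^m = a_1^(m_1) ... a_t^(m_t). Summing the
   coefficients of a polynomial over each fibre of m |-> a^m is a linear map into the group
   algebra R[G], and it kills h * (x_i^(k_i) - x_1^(lambda_(i,1)) ... x_(i-1)^(lambda_(i,i-1)))
   because, by the relations, both monomials have the same image. So congruent monomials have
   equal images, which makes Psi well defined and multiplicative. Division with remainder by
   k_i, from the last variable downwards, reduces every monomial modulo I, so the product of
   Gamma(K,L) stays in the set of reduced classes and Psi is onto, since the a_i generate G.
   Two reduced exponent vectors with the same image agree: if the last differing exponents are
   j_i < j'_i, then a_i^(j'_i - j_i) lies in <a_1, ..., a_(i-1)>, against the minimality of k_i.
   Hence Psi is a bijective homomorphism onto a group, and so Gamma(K,L) is a group. *)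

section \<open>The ideal of triangular relations and its residue classes\<close>

lemma zero_in_tri_ideal: "0 \<in> tri_ideal t k lam"
  unfolding tri_ideal_def by (auto intro: exI[of _ "\<lambda>_. 0"])

lemma tri_ideal_add:
  assumes "p \<in> tri_ideal t k lam" "q \<in> tri_ideal t k lam"
  shows "p + q \<in> tri_ideal t k lam"
proof -
  obtain h h' where "p = (\<Sum>i<t. h i * tri_gen k lam i)" "q = (\<Sum>i<t. h' i * tri_gen k lam i)"
    using assms unfolding tri_ideal_def by auto
  then show ?thesis
    unfolding tri_ideal_def by (auto intro: exI[of _ "\<lambda>i. h i + h' i"] simp: distrib_right sum.distrib)
qed

lemma tri_ideal_mult_left:
  assumes "p \<in> tri_ideal t k lam"
  shows "r * p \<in> tri_ideal t k lam"
proof -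
  obtain h where "p = (\<Sum>i<t. h i * tri_gen k lam i)"
    using assms unfolding tri_ideal_def by auto
  then show ?thesis
    unfolding tri_ideal_def by (auto intro: exI[of _ "\<lambda>i. r * h i"] simp: sum_distrib_left mult.assoc)
qed

lemma tri_ideal_diff:
  assumes "p \<in> tri_ideal t k lam" "q \<in> tri_ideal t k lam"
  shows "p - q \<in> tri_ideal t k lam"
  using tri_ideal_add[OF assms(1) tri_ideal_mult_left[OF assms(2), of "-1"]] by simp

lemma tri_gen_in_tri_ideal:
  assumes "i < t"
  shows "tri_gen k lam i \<in> tri_ideal t k lam"
proof -
  have "tri_gen k lam i = (\<Sum>j<t. (if j = i then 1 else 0) * tri_gen k lam j)"
    using assms by (simp add: sum.delta if_distrib[of "\<lambda>c. c * _"] cong: if_cong)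
  then show ?thesis
    unfolding tri_ideal_def by (intro CollectI exI)
qed

lemma cls_eq_iff: "cls t k lam p = cls t k lam q \<longleftrightarrow> p - q \<in> tri_ideal t k lam"
proof
  assume eq: "cls t k lam p = cls t k lam q"
  have "q \<in> cls t k lam q"
    by (simp add: cls_def zero_in_tri_ideal)
  then have "q \<in> cls t k lam p"
    using eq by simp
  then show "p - q \<in> tri_ideal t k lam"
    by (simp add: cls_def)
next
  assume pq: "p - q \<in> tri_ideal t k lam"
  have "p - r \<in> tri_ideal t k lam \<longleftrightarrow> q - r \<in> tri_ideal t k lam" for r
    using tri_ideal_diff[OF _ pq, of "p - r"] tri_ideal_add[OF pq, of "q - r"] by auto
  then show "cls t k lam p = cls t k lam q"
    unfolding cls_def by blast
qed

lemma mem_cls_iff: "q \<in> cls t k lam p \<longleftrightarrow> cls t k lam q = cls t k lam p"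
proof -
  have "q \<in> cls t k lam p \<longleftrightarrow> p - q \<in> tri_ideal t k lam"
    by (simp add: cls_def)
  then show ?thesis
    using cls_eq_iff[of t k lam p q] by auto
qed

lemma cls_mult_cong:
  assumes "cls t k lam p = cls t k lam p'" "cls t k lam q = cls t k lam q'"
  shows "cls t k lam (p * q) = cls t k lam (p' * q')"
proof -
  have "q * (p - p') + p' * (q - q') \<in> tri_ideal t k lam"
    using assms unfolding cls_eq_iff by (intro tri_ideal_add tri_ideal_mult_left)
  moreover have "q * (p - p') + p' * (q - q') = p * q - p' * q'"
    by (simp add: algebra_simps)
  ultimately show ?thesis
    unfolding cls_eq_iff by simp
qed

lemma cls_power_cong:
  assumes "cls t k lam p = cls t k lam q"
  shows "cls t k lam (p ^ n) = cls t k lam (q ^ n)"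
proof (induction n)
  case 0
  then show ?case by simp
next
  case (Suc n)
  then show ?case using cls_mult_cong[OF assms Suc.IH] by simp
qed

lemma cls_mvar_power:
  assumes "i < t"
  shows "cls t k lam (mvar i ^ k i) = cls t k lam (mono i (lam i))"
  using tri_gen_in_tri_ideal[OF assms] by (simp add: cls_eq_iff tri_gen_def mono_def)

lemma mono_Suc: "mono (Suc n) e = mono n e * mvar n ^ e n"
  by (simp add: mono_def lessThan_Suc mult.commute)

lemma mono_cong: "(\<And>l. l < n \<Longrightarrow> e l = f l) \<Longrightarrow> mono n e = mono n f"
  unfolding mono_def by (auto intro: prod.cong)

lemma mono_add: "mono n (\<lambda>l. e l + f l) = mono n e * mono n f"
  unfolding mono_def by (simp add: power_add prod.distrib)

lemma mono_mult_exp: "mono n (\<lambda>l. q * e l) = mono n e ^ q"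
proof -
  have "(\<Prod>l<n. mvar l ^ (q * e l)) = (\<Prod>l<n. (mvar l ^ e l) ^ q)"
    by (simp add: mult.commute flip: power_mult)
  then show ?thesis
    by (simp add: mono_def prod_power_distrib)
qed

lemma mvar_power: "mvar i ^ n = Poly_Mapping.single (Poly_Mapping.single i n) 1"
  by (induction n) (simp_all add: mvar_def mult_single flip: single_add)

definition mono_exp :: "nat \<Rightarrow> (nat \<Rightarrow> nat) \<Rightarrow> nat \<Rightarrow>\<^sub>0 nat" where
  "mono_exp n e = (\<Sum>l<n. Poly_Mapping.single l (e l))"

lemma mono_eq_single: "mono n e = Poly_Mapping.single (mono_exp n e) 1"
  by (induction n) (simp_all add: mono_def[of 0] mono_Suc mono_exp_def mvar_power mult_single add.commute)

lemma lookup_mono_exp: "Poly_Mapping.lookup (mono_exp n e) l = (if l < n then e l else 0)"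
  by (simp add: mono_exp_def lookup_sum lookup_single when_def)

lemma cls_mono_reduced:
  assumes "n \<le> t" and "\<forall>i<n. 0 < k i"
  shows "\<exists>r. (\<forall>i<n. r i < k i) \<and> cls t k lam (mono n e) = cls t k lam (mono n r)"
  using assms
proof (induction n arbitrary: e)
  case 0
  then show ?case by (auto simp: mono_def)
next
  case (Suc n)
  define q s where "q = e n div k n" and "s = e n mod k n"
  define e' where "e' l = e l + q * lam n l" for l
  obtain r where r: "\<forall>i<n. r i < k i" "cls t k lam (mono n e') = cls t k lam (mono n r)"
    using Suc.IH[of e'] Suc.prems by auto
  have "mvar n ^ e n = (mvar n ^ k n) ^ q * mvar n ^ s"
    unfolding q_def s_def by (simp flip: power_mult power_add)
  then have "cls t k lam (mono (Suc n) e) = cls t k lam (mono n e * (mvar n ^ k n) ^ q * mvar n ^ s)"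
    by (simp add: mono_Suc mult.assoc)
  also have "\<dots> = cls t k lam (mono n e * mono n (lam n) ^ q * mvar n ^ s)"
    using Suc.prems by (intro cls_mult_cong cls_power_cong cls_mvar_power) auto
  also have "\<dots> = cls t k lam (mono n r * mvar n ^ s)"
    using r(2) unfolding e'_def mono_add mono_mult_exp by (intro cls_mult_cong) auto
  also have "\<dots> = cls t k lam (mono (Suc n) (r(n := s)))"
    by (simp add: mono_Suc mono_cong[of n r "r(n := s)"])
  finally have "cls t k lam (mono (Suc n) e) = cls t k lam (mono (Suc n) (r(n := s)))" .
  moreover have "\<forall>i<Suc n. (r(n := s)) i < k i"
    using r(1) Suc.prems unfolding s_def by (auto simp: less_Suc_eq)
  ultimately show ?case
    by blast
qed

lemma carrier_Gamma: "carrier (Gamma t k lam) = {cls t k lam (mono t j) | j. \<forall>i<t. j i < k i}"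
  by (simp add: Gamma_def)

lemma one_Gamma: "\<one>\<^bsub>Gamma t k lam\<^esub> = cls t k lam (mono t (\<lambda>_. 0))"
  by (simp add: Gamma_def mono_def)

lemma mult_Gamma_cls:
  "cls t k lam p \<otimes>\<^bsub>Gamma t k lam\<^esub> cls t k lam q = cls t k lam (p * q)"
proof -
  have some_cls: "cls t k lam (SOME p'. p' \<in> cls t k lam r) = cls t k lam r" for r
    using someI[of "\<lambda>p'. p' \<in> cls t k lam r" r] by (simp add: mem_cls_iff)
  show ?thesis
    using cls_mult_cong[OF some_cls some_cls] by (simp add: Gamma_def)
qed

lemma mult_Gamma_mono:
  "cls t k lam (mono t j) \<otimes>\<^bsub>Gamma t k lam\<^esub> cls t k lam (mono t j')
    = cls t k lam (mono t (\<lambda>l. j l + j' l))"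
  by (simp add: mult_Gamma_cls mono_add)

lemma cls_mono_in_Gamma:
  assumes "\<forall>i<t. 0 < k i"
  shows "cls t k lam (mono t e) \<in> carrier (Gamma t k lam)"
proof -
  obtain r where "\<forall>i<t. r i < k i" "cls t k lam (mono t e) = cls t k lam (mono t r)"
    using cls_mono_reduced[OF order_refl assms] by blast
  then show ?thesis
    by (auto simp: Gamma_def)
qed

section \<open>Coefficient sums over the fibres of a map on exponent vectors\<close>

definition fibre_coeff :: "((nat \<Rightarrow>\<^sub>0 nat) \<Rightarrow> 'g) \<Rightarrow> rpoly \<Rightarrow> 'g \<Rightarrow> real" where
  "fibre_coeff \<phi> p g = (\<Sum>m. Poly_Mapping.lookup p m when \<phi> m = g)"

lemma fibre_coeff_zero [simp]: "fibre_coeff \<phi> 0 g = 0"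
  by (simp add: fibre_coeff_def)

lemma fibre_coeff_add: "fibre_coeff \<phi> (p + q) g = fibre_coeff \<phi> p g + fibre_coeff \<phi> q g"
proof -
  have fin: "finite {m. (Poly_Mapping.lookup r m when \<phi> m = g) \<noteq> 0}" for r :: rpoly
    by (rule finite_subset[of _ "Poly_Mapping.keys r"]) (auto simp: in_keys_iff)
  show ?thesis
    unfolding fibre_coeff_def by (simp add: lookup_add when_add_distrib Sum_any.distrib[OF fin fin])
qed

lemma fibre_coeff_diff: "fibre_coeff \<phi> (p - q) g = fibre_coeff \<phi> p g - fibre_coeff \<phi> q g"
  using fibre_coeff_add[of \<phi> "p - q" q g] by simp

lemma fibre_coeff_sum: "fibre_coeff \<phi> (\<Sum>i\<in>A. f i) g = (\<Sum>i\<in>A. fibre_coeff \<phi> (f i) g)"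
  by (induction A rule: infinite_finite_induct) (simp_all add: fibre_coeff_add)

lemma fibre_coeff_single:
  "fibre_coeff \<phi> (Poly_Mapping.single m c) g = (c when \<phi> m = g)"
proof -
  have "fibre_coeff \<phi> (Poly_Mapping.single m c) g = (\<Sum>m'. (c when \<phi> m' = g) when m = m')"
    unfolding fibre_coeff_def lookup_single by (simp add: when_commute)
  then show ?thesis
    by simp
qed

lemma update_eq_single_add:
  "a \<notin> Poly_Mapping.keys f \<Longrightarrow> Poly_Mapping.update a b f = Poly_Mapping.single a b + f"
  by (rule poly_mapping_eqI) (auto simp: lookup_update lookup_add lookup_single in_keys_iff when_def)

lemma fibre_coeff_mult_single_cong:
  assumes "\<And>m. \<phi> (m + \<mu>) = \<phi> (m + \<mu>')"
  shows "fibre_coeff \<phi> (p * Poly_Mapping.single \<mu> c) g = fibre_coeff \<phi> (p * Poly_Mapping.single \<mu>' c) g"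
proof (induction p rule: Poly_Mapping.update_induct)
  case const
  then show ?case by simp
next
  case (update f a b)
  then show ?case
    by (simp add: update_eq_single_add distrib_right fibre_coeff_add mult_single fibre_coeff_single assms)
qed

lemma fibre_coeff_tri_ideal:
  assumes "\<And>i m. i < t \<Longrightarrow> \<phi> (m + Poly_Mapping.single i (k i)) = \<phi> (m + mono_exp i (lam i))"
    and "p \<in> tri_ideal t k lam"
  shows "fibre_coeff \<phi> p g = 0"
proof -
  obtain h where h: "p = (\<Sum>i<t. h i * tri_gen k lam i)"
    using assms(2) unfolding tri_ideal_def by auto
  have "tri_gen k lam i = Poly_Mapping.single (Poly_Mapping.single i (k i)) 1
      - Poly_Mapping.single (mono_exp i (lam i)) 1" for i
    by (simp add: tri_gen_def mvar_power mono_def flip: mono_eq_single)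
  then have "fibre_coeff \<phi> (h i * tri_gen k lam i) g = 0" if "i < t" for i
    using fibre_coeff_mult_single_cong[OF assms(1)[OF that]] by (simp add: right_diff_distrib fibre_coeff_diff)
  then show ?thesis
    by (simp add: h fibre_coeff_sum)
qed

lemma (in group) iso_to_group_imp_group:
  assumes iso: "h \<in> iso H G"
    and closed: "\<And>x y. x \<in> carrier H \<Longrightarrow> y \<in> carrier H \<Longrightarrow> x \<otimes>\<^bsub>H\<^esub> y \<in> carrier H"
    and one_closed: "\<one>\<^bsub>H\<^esub> \<in> carrier H" and h_one: "h \<one>\<^bsub>H\<^esub> = \<one>"
  shows "group H"
proof -
  have h_mult: "h (x \<otimes>\<^bsub>H\<^esub> y) = h x \<otimes> h y" if "x \<in> carrier H" "y \<in> carrier H" for x y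
    using iso that by (simp add: iso_def hom_mult)
  have h_closed: "h x \<in> carrier G" if "x \<in> carrier H" for x
    using iso that by (auto simp: iso_def hom_def)
  have h_inj: "x = y" if "x \<in> carrier H" "y \<in> carrier H" "h x = h y" for x y
    using iso that by (auto simp: iso_def bij_betw_def dest: inj_onD)
  have h_onto: "\<exists>x\<in>carrier H. h x = g" if "g \<in> carrier G" for g
  proof -
    have "g \<in> h ` carrier H"
      using iso that by (simp add: iso_def bij_betw_def)
    then show ?thesis
      by blast
  qed
  show ?thesis
  proof (rule groupI)
    show "(x \<otimes>\<^bsub>H\<^esub> y) \<otimes>\<^bsub>H\<^esub> z = x \<otimes>\<^bsub>H\<^esub> (y \<otimes>\<^bsub>H\<^esub> z)"
      if "x \<in> carrier H" "y \<in> carrier H" "z \<in> carrier H" for x y z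
      using that by (intro h_inj) (simp_all add: closed h_mult h_closed m_assoc)
    show "\<one>\<^bsub>H\<^esub> \<otimes>\<^bsub>H\<^esub> x = x" if "x \<in> carrier H" for x
      using that by (intro h_inj) (simp_all add: closed one_closed h_mult h_closed h_one)
    show "\<exists>y\<in>carrier H. y \<otimes>\<^bsub>H\<^esub> x = \<one>\<^bsub>H\<^esub>" if x: "x \<in> carrier H" for x
    proof -
      obtain y where y: "y \<in> carrier H" "h y = inv (h x)"
        using h_onto h_closed[OF x] by (meson inv_closed)
      then have "y \<otimes>\<^bsub>H\<^esub> x = \<one>\<^bsub>H\<^esub>"
        using x by (intro h_inj) (simp_all add: closed one_closed h_mult h_closed h_one)
      then show ?thesis
        using y(1) by blast
    qed
  qed (use closed one_closed in auto)
qed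

lemma (in group) generate_nat_pow_closed: "x \<in> generate G S \<Longrightarrow> x [^] (m::nat) \<in> generate G S"
  by (induction m) (auto intro: generate.one generate.eng)

lemma (in group) inv_eq_nat_pow_order:
  assumes "finite (carrier G)" and "x \<in> carrier G"
  shows "inv x = x [^] (order G - 1)"
proof (rule inv_equality)
  have "0 < order G"
    using assms(1) by (simp add: order_gt_0_iff_finite)
  then have "x [^] (order G - 1) \<otimes> x = x [^] order G"
    using assms(2) by (simp flip: nat_pow_Suc)
  then show "x [^] (order G - 1) \<otimes> x = \<one>"
    using assms(2) by (simp add: pow_order_eq_1)
qed (use assms in auto)

section \<open>Generating sets with triangular relations\<close>

locale triangular_generators = comm_group G for G :: "('g, 'b) monoid_scheme" (structure) +
  fixes a :: "nat \<Rightarrow> 'g" and t :: nat and k :: "nat \<Rightarrow> nat" and lam :: "nat \<Rightarrow> nat \<Rightarrow> nat"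
  assumes finite_carrier: "finite (carrier G)"
    and a_closed: "a ` {..<t} \<subseteq> carrier G"
    and generate_a: "generate G (a ` {..<t}) = carrier G"
    and rel: "\<forall>i<t. a i [^] k i = (\<Otimes>j\<in>{..<i}. a j [^] lam i j)"
    and k_pos: "\<forall>i<t. 0 < k i"
    and minimal: "\<And>i m. i < t \<Longrightarrow> 0 < m \<Longrightarrow> m < k i \<Longrightarrow> a i [^] m \<notin> generate G (a ` {..<i})"
begin

definition aprod :: "(nat \<Rightarrow> nat) \<Rightarrow> nat \<Rightarrow> 'g" where
  "aprod e n = (\<Otimes>l\<in>{..<n}. a l [^] e l)"

lemma a_in_carrier: "l < t \<Longrightarrow> a l \<in> carrier G"
  using a_closed by auto

lemma a_pow_in_carrier:
  fixes e :: "nat \<Rightarrow> nat"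
  assumes "n \<le> t"
  shows "(\<lambda>l. a l [^] e l) \<in> {..<n} \<rightarrow> carrier G"
proof
  fix l
  assume "l \<in> {..<n}"
  then have "l < t"
    using assms by simp
  then show "a l [^] e l \<in> carrier G"
    by (intro nat_pow_closed a_in_carrier)
qed

lemma aprod_closed: "n \<le> t \<Longrightarrow> aprod e n \<in> carrier G"
  unfolding aprod_def using a_pow_in_carrier by (intro finprod_closed)

lemma aprod_Suc:
  assumes "n < t"
  shows "aprod e (Suc n) = aprod e n \<otimes> a n [^] e n"
proof -
  have "aprod e (Suc n) = a n [^] e n \<otimes> aprod e n"
    unfolding aprod_def lessThan_Suc using assms a_pow_in_carrier[of n e] a_in_carrier[of n]
    by (subst finprod_insert) auto
  then show ?thesis
    using assms by (simp add: m_comm[OF _ aprod_closed] a_in_carrier)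
qed

lemma aprod_cong: "n \<le> t \<Longrightarrow> (\<And>l. l < n \<Longrightarrow> e l = f l) \<Longrightarrow> aprod e n = aprod f n"
  unfolding aprod_def using a_pow_in_carrier[of n f] by (intro finprod_cong) auto

lemma aprod_zero: "aprod (\<lambda>_. 0) n = \<one>"
  unfolding aprod_def by (intro finprod_one_eqI) simp

lemma aprod_add:
  assumes "n \<le> t"
  shows "aprod (\<lambda>l. e l + f l) n = aprod e n \<otimes> aprod f n"
proof -
  have "aprod (\<lambda>l. e l + f l) n = (\<Otimes>l\<in>{..<n}. a l [^] e l \<otimes> a l [^] f l)"
    unfolding aprod_def using assms by (intro finprod_cong') (auto simp: nat_pow_mult a_in_carrier)
  also have "\<dots> = aprod e n \<otimes> aprod f n"
    unfolding aprod_def using a_pow_in_carrier[OF assms] by (intro finprod_multf)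
  finally show ?thesis .
qed

lemma aprod_truncate:
  assumes "n \<le> t" and "\<And>l. n \<le> l \<Longrightarrow> l < t \<Longrightarrow> e l = 0"
  shows "aprod e t = aprod e n"
  unfolding aprod_def using assms a_pow_in_carrier[OF order_refl]
  by (intro finprod_mono_neutral_cong_right) auto

lemma aprod_delta: "l < t \<Longrightarrow> aprod (\<lambda>m. c when l = m) t = a l [^] c"
  using aprod_truncate[of "Suc l" "\<lambda>m. c when l = m"] aprod_Suc[of l] aprod_zero[of l]
    aprod_cong[of l "\<lambda>m. c when l = m" "\<lambda>_. 0"] a_in_carrier[of l]
  by simp

lemma aprod_in_generate: "n \<le> t \<Longrightarrow> aprod e n \<in> generate G (a ` {..<n})"
proof (induction n)
  case 0
  then show ?case by (simp add: aprod_def generate.one)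
next
  case (Suc n)
  have "generate G (a ` {..<n}) \<subseteq> generate G (a ` {..<Suc n})"
    by (intro mono_generate) auto
  then have "aprod e n \<in> generate G (a ` {..<Suc n})"
    using Suc by auto
  moreover have "a n [^] e n \<in> generate G (a ` {..<Suc n})"
    using Suc a_in_carrier by (intro generate_nat_pow_closed generate.incl) auto
  ultimately show ?case
    using Suc by (simp add: aprod_Suc generate.eng)
qed

lemma a_pow_cancel:
  assumes n: "n < t" and x: "x \<in> generate G (a ` {..<n})" and y: "y \<in> generate G (a ` {..<n})"
    and uv: "u \<le> v" "v < k n" and eq: "x \<otimes> a n [^] u = y \<otimes> a n [^] v"
  shows "u = v"
proof (rule ccontr)
  assume "u \<noteq> v"
  interpret H: subgroup "generate G (a ` {..<n})" G
    using n a_in_carrier by (intro generate_is_subgroup) auto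
  have an: "a n \<in> carrier G"
    using n by (rule a_in_carrier)
  have xc: "x \<in> carrier G" and yc: "y \<in> carrier G"
    using H.mem_carrier x y by auto
  have "a n [^] v = a n [^] (v - u) \<otimes> a n [^] u"
    using nat_pow_mult[OF an, of "v - u" u] uv by simp
  then have "x \<otimes> a n [^] u = (y \<otimes> a n [^] (v - u)) \<otimes> a n [^] u"
    using eq an yc by (simp add: m_assoc)
  then have "x = y \<otimes> a n [^] (v - u)"
    using an xc yc by simp
  then have "a n [^] (v - u) = inv y \<otimes> x"
    using an xc yc by (simp add: inv_solve_left)
  then have "a n [^] (v - u) \<in> generate G (a ` {..<n})"
    using H.m_closed[OF H.m_inv_closed[OF y] x] by simp
  moreover have "0 < v - u" "v - u < k n"
    using uv \<open>u \<noteq> v\<close> by auto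
  ultimately show False
    using minimal n by blast
qed

lemma aprod_reduced_inj:
  "n \<le> t \<Longrightarrow> \<forall>l<n. j l < k l \<Longrightarrow> \<forall>l<n. j' l < k l \<Longrightarrow> aprod j n = aprod j' n
    \<Longrightarrow> \<forall>l<n. j l = j' l"
proof (induction n)
  case 0
  then show ?case by simp
next
  case (Suc n)
  then have n: "n < t" by simp
  have eq: "aprod j n \<otimes> a n [^] j n = aprod j' n \<otimes> a n [^] j' n"
    using Suc.prems n by (simp add: aprod_Suc)
  have gen: "aprod j n \<in> generate G (a ` {..<n})" "aprod j' n \<in> generate G (a ` {..<n})"
    using n by (simp_all add: aprod_in_generate)
  have top: "j n = j' n"
    using a_pow_cancel[OF n gen _ _ eq] a_pow_cancel[OF n gen(2,1) _ _ eq[symmetric]] Suc.prems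
    by (cases "j n \<le> j' n") auto
  then have "aprod j n = aprod j' n"
    using eq n a_in_carrier aprod_closed by simp
  then show ?case
    using Suc top by (auto simp: less_Suc_eq)
qed

lemma aprod_surj:
  assumes "g \<in> carrier G"
  shows "\<exists>e. g = aprod e t"
proof -
  have "g \<in> generate G (a ` {..<t})"
    using assms generate_a by simp
  then show ?thesis
  proof (induction rule: generate.induct)
    case one
    show ?case
      by (rule exI[of _ "\<lambda>_. 0"]) (simp add: aprod_zero)
  next
    case (incl h)
    then obtain l where "l < t" "h = a l"
      by auto
    then show ?case
      by (intro exI[of _ "\<lambda>m. 1 when l = m"]) (simp add: aprod_delta a_in_carrier)
  next
    case (inv h)
    then obtain l where "l < t" "h = a l"
      by auto
    then show ?case
      by (intro exI[of _ "\<lambda>m. order G - 1 when l = m"])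
        (simp add: aprod_delta a_in_carrier inv_eq_nat_pow_order[OF finite_carrier])
  next
    case (eng h1 h2)
    then obtain e1 e2 where "h1 = aprod e1 t" "h2 = aprod e2 t"
      by blast
    then show ?case
      by (intro exI[of _ "\<lambda>l. e1 l + e2 l"]) (simp add: aprod_add)
  qed
qed

definition monomial_val :: "(nat \<Rightarrow>\<^sub>0 nat) \<Rightarrow> 'g" where
  "monomial_val m = aprod (Poly_Mapping.lookup m) t"

lemma monomial_val_add: "monomial_val (m + \<mu>) = monomial_val m \<otimes> monomial_val \<mu>"
proof -
  have "Poly_Mapping.lookup (m + \<mu>) = (\<lambda>l. Poly_Mapping.lookup m l + Poly_Mapping.lookup \<mu> l)"
    by (simp add: fun_eq_iff lookup_add)
  then show ?thesis
    by (simp add: monomial_val_def aprod_add)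
qed

lemma monomial_val_single:
  assumes "l < t"
  shows "monomial_val (Poly_Mapping.single l c) = a l [^] c"
proof -
  have "Poly_Mapping.lookup (Poly_Mapping.single l c) = (\<lambda>m. c when l = m)"
    by (simp add: fun_eq_iff lookup_single)
  then show ?thesis
    using assms by (simp add: monomial_val_def aprod_delta)
qed

lemma monomial_val_mono_exp:
  assumes "n \<le> t"
  shows "monomial_val (mono_exp n e) = aprod e n"
proof -
  have "monomial_val (mono_exp n e) = aprod (Poly_Mapping.lookup (mono_exp n e)) n"
    unfolding monomial_val_def using assms by (intro aprod_truncate) (auto simp: lookup_mono_exp)
  also have "\<dots> = aprod e n"
    using assms by (intro aprod_cong) (auto simp: lookup_mono_exp)
  finally show ?thesis .
qed

lemma cls_mono_eq_imp_aprod_eq: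
  assumes "cls t k lam (mono t j) = cls t k lam (mono t j')"
  shows "aprod j t = aprod j' t"
proof -
  have "monomial_val (m + Poly_Mapping.single i (k i)) = monomial_val (m + mono_exp i (lam i))"
    if i: "i < t" for i m
  proof -
    have "a i [^] k i = aprod (lam i) i"
      using rel i by (simp add: aprod_def)
    then show ?thesis
      using i by (simp add: monomial_val_add monomial_val_single monomial_val_mono_exp)
  qed
  moreover have "mono t j - mono t j' \<in> tri_ideal t k lam"
    using assms by (simp add: cls_eq_iff)
  ultimately have "fibre_coeff monomial_val (mono t j - mono t j') (aprod j t) = 0"
    by (rule fibre_coeff_tri_ideal)
  moreover have "fibre_coeff monomial_val (mono t j - mono t j') (aprod j t)
      = 1 - (1 when aprod j' t = aprod j t)"
    unfolding mono_eq_single fibre_coeff_diff fibre_coeff_single monomial_val_mono_exp[OF order_refl]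
    by simp
  ultimately show ?thesis
    by (cases "aprod j' t = aprod j t") simp_all
qed

definition Psi :: "rpoly set \<Rightarrow> 'g" where
  "Psi U = aprod (SOME j. U = cls t k lam (mono t j)) t"

lemma Psi_cls: "Psi (cls t k lam (mono t j)) = aprod j t"
proof -
  let ?j = "SOME j'. cls t k lam (mono t j) = cls t k lam (mono t j')"
  have "cls t k lam (mono t j) = cls t k lam (mono t ?j)"
    using someI[of "\<lambda>j'. cls t k lam (mono t j) = cls t k lam (mono t j')" j] by simp
  then show ?thesis
    unfolding Psi_def by (rule cls_mono_eq_imp_aprod_eq[symmetric])
qed

lemma Psi_hom: "Psi \<in> hom (Gamma t k lam) G"
proof (rule homI)
  fix x y
  assume "x \<in> carrier (Gamma t k lam)" "y \<in> carrier (Gamma t k lam)"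
  then obtain j j' where "x = cls t k lam (mono t j)" "y = cls t k lam (mono t j')"
    by (auto simp: carrier_Gamma)
  then show "Psi x \<in> carrier G" "Psi (x \<otimes>\<^bsub>Gamma t k lam\<^esub> y) = Psi x \<otimes> Psi y"
    by (simp_all add: Psi_cls aprod_closed mult_Gamma_mono aprod_add)
qed

lemma Psi_inj: "inj_on Psi (carrier (Gamma t k lam))"
proof (rule inj_onI)
  fix x y
  assume "x \<in> carrier (Gamma t k lam)" "y \<in> carrier (Gamma t k lam)" and eq: "Psi x = Psi y"
  then obtain j j' where j: "\<forall>i<t. j i < k i" "x = cls t k lam (mono t j)"
    and j': "\<forall>i<t. j' i < k i" "y = cls t k lam (mono t j')"
    by (auto simp: carrier_Gamma)
  have "aprod j t = aprod j' t"
    using eq j(2) j'(2) by (simp add: Psi_cls)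
  then have "\<forall>i<t. j i = j' i"
    using aprod_reduced_inj[OF order_refl j(1) j'(1)] by blast
  then have "mono t j = mono t j'"
    by (intro mono_cong) simp
  then show "x = y"
    using j(2) j'(2) by simp
qed

lemma Psi_image: "Psi ` carrier (Gamma t k lam) = carrier G"
proof
  show "Psi ` carrier (Gamma t k lam) \<subseteq> carrier G"
    using Psi_hom by (auto simp: hom_def)
  show "carrier G \<subseteq> Psi ` carrier (Gamma t k lam)"
  proof
    fix g
    assume "g \<in> carrier G"
    then obtain e where "g = Psi (cls t k lam (mono t e))"
      using aprod_surj by (auto simp: Psi_cls)
    then show "g \<in> Psi ` carrier (Gamma t k lam)"
      using cls_mono_in_Gamma[OF k_pos] by blast
  qed
qed

lemma Psi_iso: "Psi \<in> iso (Gamma t k lam) G"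
  using Psi_hom Psi_inj Psi_image by (simp add: iso_def bij_betw_def)

lemma Gamma_group: "group (Gamma t k lam)"
proof (rule iso_to_group_imp_group[OF Psi_iso])
  fix x y
  assume "x \<in> carrier (Gamma t k lam)" "y \<in> carrier (Gamma t k lam)"
  then obtain j j' where "x = cls t k lam (mono t j)" "y = cls t k lam (mono t j')"
    by (auto simp: carrier_Gamma)
  then show "x \<otimes>\<^bsub>Gamma t k lam\<^esub> y \<in> carrier (Gamma t k lam)"
    by (simp add: mult_Gamma_mono cls_mono_in_Gamma[OF k_pos])
next
  show "\<one>\<^bsub>Gamma t k lam\<^esub> \<in> carrier (Gamma t k lam)"
    unfolding one_Gamma by (rule cls_mono_in_Gamma[OF k_pos])
  show "Psi \<one>\<^bsub>Gamma t k lam\<^esub> = \<one>"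
    by (simp add: one_Gamma Psi_cls aprod_zero)
qed

end

theorem mainTheorem3:
  fixes G (structure)
    and a :: "nat \<Rightarrow> 'g" and t :: nat and k :: "nat \<Rightarrow> nat" and lam :: "nat \<Rightarrow> nat \<Rightarrow> nat"
  assumes "comm_group G"
    and "finite (carrier G)"
    and "a ` {..<t} \<subseteq> carrier G"
    and "generate G (a ` {..<t}) = carrier G"
    and rel: "\<forall>i<t. a i [^] k i = (\<Otimes>j\<in>{..<i}. a j [^] lam i j)"
    and minimal: "\<forall>i<t. 2 \<le> k i \<and> a i [^] k i \<in> generate G (a ` {..<i})
                     \<and> (\<forall>n::nat. 0 < n \<and> n < k i \<longrightarrow> a i [^] n \<notin> generate G (a ` {..<i}))"
  shows "group (Gamma t k lam) \<and>
         (\<exists>\<Psi>. \<Psi> \<in> iso (Gamma t k lam) G \<and>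
              (\<forall>j :: nat \<Rightarrow> nat. (\<forall>i<t. j i < k i) \<longrightarrow>
                 \<Psi> (cls t k lam (mono t j)) = (\<Otimes>i\<in>{..<t}. a i [^] j i)))"
proof -
  have "\<forall>i<t. 0 < k i"
    using minimal by fastforce
  moreover have "a i [^] m \<notin> generate G (a ` {..<i})" if "i < t" "0 < m" "m < k i" for i m
    using minimal that by blast
  ultimately interpret triangular_generators G a t k lam
    using assms(1-5) by (simp add: triangular_generators_def triangular_generators_axioms_def)
  show ?thesis
    using Gamma_group Psi_iso Psi_cls by (auto simp: aprod_def)
qed

end
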